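(* Let $\mathcal C$ be a finite set and $P(\cdot\mid\cdot)$ a transition kernel on $\mathcal C$ with stationary distribution $\pi$, and assume $\delta:=\min_{a,a'\in\mathcal C}P(a'\mid a)>0$. For each $m\in\mathbb N$ let $\boldsymbol X=\{X_{ij}\}_{1\le i,j\le m}$ be a random $m\times m$ array over $\mathcal C$ generated according to either Scenario 1 (the $m$ columns are independent Markov chains, read top to bottom, with initial distribution $\pi$ and kernel $P$) or Scenario 2 (the $m$ rows are independent Markov chains, read left to right, with initial distribution $\pi$ and kernel $P$). Let $H_\infty=-\sum_{a,a'\in\mathcal C}\pi(a)P(a'\mid a)\log P(a'\mid a)$. Then for every sufficiently large integer $D$ there exist a dictionary $\operatorname{Dict}$ of tokens with $|\operatorname{Dict}|\le D$, each token being a nonempty finite string over $\mathcal C$, and for each $m$ an encoding $\operatorname{enc}$ mapping each $m\times m$ array over $\mathcal C$ to a finite sequence of tokens in $\operatorname{Dict}$ such that concatenating the tokens of $\operatorname{enc}(\boldsymbol X)$ yields the entries of $\boldsymbol X$ read column by column from top to bottom (Scenario 1), respectively row by row from left to right (Scenario 2), and such that $$\limsup_{m\to\infty}\ \min_{Q\in\mathcal Q_{\text{1-gram}}}\ -\frac{1}{m^2}\mathbb E\big[\log Q(\operatorname{enc}(\boldsymbol X))\big]\ \le\ \frac{1}{1-\varepsilon}H_\infty,\qquad \varepsilon=\frac{\log(1/\delta)}{0.99\log D}.$$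
   Context: A unigram model $Q\in\mathcal Q_{\text{1-gram}}$ over the token dictionary $\operatorname{Dict}$ is specified by a probability distribution $Q_\#$ on $\mathbb N$ and a probability distribution $Q_{\text{tok}}$ on $\operatorname{Dict}$, and assigns to a token sequence $\mathbf t=(t_1,\dots,t_{|\mathbf t|})$ the probability $Q(\mathbf t)=Q_\#(|\mathbf t|)\prod_{r=1}^{|\mathbf t|}Q_{\text{tok}}(t_r)$. Logarithms are natural. *)

theory Defs
  imports "HOL-Analysis.Analysis"
begin

text \<open>Alphabet C is a finite type 'a. Kernel: P a a' = P(a' | a).\<close>

definition markov_kernel :: "('a::finite \<Rightarrow> 'a \<Rightarrow> real) \<Rightarrow> bool" where
  "markov_kernel P \<longleftrightarrow> (\<forall>a a'. P a a' \<ge> 0) \<and> (\<forall>a. (\<Sum>a'\<in>UNIV. P a a') = 1)"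

definition stationary :: "('a::finite \<Rightarrow> 'a \<Rightarrow> real) \<Rightarrow> ('a \<Rightarrow> real) \<Rightarrow> bool" where
  "stationary P \<pi> \<longleftrightarrow> (\<forall>a. \<pi> a \<ge> 0) \<and> (\<Sum>a\<in>UNIV. \<pi> a) = 1 \<and>
     (\<forall>a'. (\<Sum>a\<in>UNIV. \<pi> a * P a a') = \<pi> a')"

definition min_trans :: "('a::finite \<Rightarrow> 'a \<Rightarrow> real) \<Rightarrow> real" where
  "min_trans P = Min {P a a' | a a'. True}"

definition entropy_rate :: "('a::finite \<Rightarrow> 'a \<Rightarrow> real) \<Rightarrow> ('a \<Rightarrow> real) \<Rightarrow> real" where
  "entropy_rate P \<pi> = - (\<Sum>a\<in>UNIV. \<Sum>a'\<in>UNIV. \<pi> a * P a a' * ln (P a a'))"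

text \<open>m x m arrays over C: functions X i j (row i, column j), indices 0..m-1,
  extensional (undefined outside the index range).\<close>

definition arrays :: "nat \<Rightarrow> (nat \<Rightarrow> nat \<Rightarrow> 'a) set" where
  "arrays m = {X. \<forall>i j. \<not> (i < m \<and> j < m) \<longrightarrow> X i j = undefined}"

definition array_prob :: "nat \<Rightarrow> ('a \<Rightarrow> 'a \<Rightarrow> real) \<Rightarrow> ('a \<Rightarrow> real) \<Rightarrow> nat \<Rightarrow> (nat \<Rightarrow> nat \<Rightarrow> 'a) \<Rightarrow> real" where
  "array_prob s P \<pi> m X =
     (if s = 1 then (\<Prod>j<m. \<pi> (X 0 j) * (\<Prod>i<m - 1. P (X i j) (X (Suc i) j)))
      else (\<Prod>i<m. \<pi> (X i 0) * (\<Prod>j<m - 1. P (X i j) (X i (Suc j)))))"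

definition read_array :: "nat \<Rightarrow> nat \<Rightarrow> (nat \<Rightarrow> nat \<Rightarrow> 'a) \<Rightarrow> 'a list" where
  "read_array s m X =
     (if s = 1 then concat (map (\<lambda>j. map (\<lambda>i. X i j) [0..<m]) [0..<m])
      else concat (map (\<lambda>i. map (\<lambda>j. X i j) [0..<m]) [0..<m]))"

text \<open>Unigram models over the dictionary: a length distribution qn on nat
  and a token distribution qt on Dict.\<close>

definition unigram_models :: "'a list set \<Rightarrow> ((nat \<Rightarrow> real) \<times> ('a list \<Rightarrow> real)) set" where
  "unigram_models Dict = {(qn, qt). (\<forall>n. qn n \<ge> 0) \<and> qn sums 1 \<and>
      (\<forall>t\<in>Dict. qt t \<ge> 0) \<and> (\<Sum>t\<in>Dict. qt t) = 1}"

definition unigram_prob :: "((nat \<Rightarrow> real) \<times> ('a list \<Rightarrow> real)) \<Rightarrow> 'a list list \<Rightarrow> real" where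
  "unigram_prob Q ts = fst Q (length ts) * prod_list (map (snd Q) ts)"

definition neg_log :: "real \<Rightarrow> ereal" where
  "neg_log p = (if p > 0 then ereal (- ln p) else \<infinity>)"

definition best_unigram_loss ::
  "nat \<Rightarrow> ('a::finite \<Rightarrow> 'a \<Rightarrow> real) \<Rightarrow> ('a \<Rightarrow> real) \<Rightarrow> 'a list set \<Rightarrow>
   ((nat \<Rightarrow> nat \<Rightarrow> 'a) \<Rightarrow> 'a list list) \<Rightarrow> nat \<Rightarrow> ereal" where
  "best_unigram_loss s P \<pi> Dict enc m =
     (INF Q\<in>unigram_models Dict.
        ereal (1 / (real m)^2) *
        (\<Sum>X\<in>arrays m. ereal (array_prob s P \<pi> m X) * neg_log (unigram_prob Q (enc X))))"

end

theory Submission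
  imports Defs
begin

text \<open>Tunstall's construction. For a threshold \<open>\<tau>\<close>, the tokens are the single letters and the
  words whose path weight \<open>\<Prod> P(a\<^sub>i\<^sub>+\<^sub>1 | a\<^sub>i)\<close> first drops below \<open>\<tau>\<close> at their last letter. These
  words form a prefix-free set whose weights satisfy a Kraft inequality \<open>\<Sum> \<le> |C|\<close>; as each weight
  is at least \<open>\<tau>\<delta>\<close>, there are at most \<open>|C|/(\<tau>\<delta>)\<close> of them. The read-out word is parsed greedily
  into tokens. Giving each such word a probability proportional to its weight, its code length
  exceeds its path cost \<open>-log weight > log (1/\<tau>)\<close> only by a constant \<open>c\<close>, i.e. by a fraction
  \<open>c / log (1/\<tau>)\<close>, while the letters left over at the end of the word cost \<open>O(1)\<close>. The read-out
  word consists of \<open>m\<close> independent stationary chains of length \<open>m\<close>, so its expected path cost is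
  \<open>m\<^sup>2 H\<^sub>\<infinity>\<close> plus \<open>log (1/\<delta>)\<close> for each of the \<open>m\<close> chain boundaries, and a uniform law on the
  number of tokens costs \<open>log (m\<^sup>2 + 1)\<close>. Hence the limsup is at most \<open>(1 + c / log (1/\<tau>)) H\<^sub>\<infinity>\<close>,
  and \<open>\<tau> = 2|C|/(\<delta>D)\<close> makes the dictionary fit into \<open>D\<close> tokens and this factor at most
  \<open>1/(1 - \<epsilon>)\<close> for large \<open>D\<close>.\<close>

lemma finite_lists_length: "finite {xs :: 'a::finite list. length xs = n}"
  using finite_lists_length_eq[of "UNIV :: 'a set" n] by simp

lemma sum_lists_length_Suc_snoc:
  "(\<Sum>xs\<in>{xs :: 'a::finite list. length xs = Suc n}. f xs) =
   (\<Sum>xs\<in>{xs. length xs = n}. \<Sum>c\<in>UNIV. f (xs @ [c]))"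
proof -
  have eq: "{xs :: 'a list. length xs = Suc n} = (\<lambda>(xs, c). xs @ [c]) ` ({xs. length xs = n} \<times> UNIV)"
  proof (rule set_eqI, rule iffI)
    fix xs :: "'a list" assume "xs \<in> {xs. length xs = Suc n}"
    then have "xs = butlast xs @ [last xs]" "length (butlast xs) = n"
      by (auto intro!: append_butlast_last_id[symmetric])
    then show "xs \<in> (\<lambda>(xs, c). xs @ [c]) ` ({xs. length xs = n} \<times> UNIV)"
      by (metis (mono_tags, lifting) SigmaI UNIV_I case_prod_conv image_eqI mem_Collect_eq)
  qed auto
  have "inj_on (\<lambda>(xs, c). xs @ [c]) ({xs :: 'a list. length xs = n} \<times> UNIV)"
    by (auto simp: inj_on_def)
  then show ?thesis
    unfolding eq by (subst sum.reindex) (simp_all add: sum.cartesian_product split_def)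
qed

lemma sum_lists_length_Suc_Cons:
  "(\<Sum>xs\<in>{xs :: 'a::finite list. length xs = Suc n}. f xs) =
   (\<Sum>c\<in>UNIV. \<Sum>xs\<in>{xs. length xs = n}. f (c # xs))"
proof -
  have eq: "{xs :: 'a list. length xs = Suc n} = (\<lambda>(c, xs). c # xs) ` (UNIV \<times> {xs. length xs = n})"
    by (auto simp: length_Suc_conv image_iff)
  have "inj_on (\<lambda>(c, xs). c # xs) (UNIV \<times> {xs :: 'a list. length xs = n})"
    by (auto simp: inj_on_def)
  then show ?thesis
    unfolding eq by (subst sum.reindex) (simp_all add: sum.cartesian_product split_def)
qed


section \<open>Chains restarted every \<open>m\<close> steps\<close>

text \<open>Read chain by chain, an array becomes a word of length \<open>m\<^sup>2\<close> in which every \<open>m\<close>-th letter is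
  drawn afresh from \<open>\<pi>\<close> and every other letter follows \<open>P\<close> from its predecessor.\<close>

definition block_chain_prob :: "('a \<Rightarrow> 'a \<Rightarrow> real) \<Rightarrow> ('a \<Rightarrow> real) \<Rightarrow> nat \<Rightarrow> 'a list \<Rightarrow> real" where
  "block_chain_prob P \<pi> m y = (\<Prod>k<length y. if k mod m = 0 then \<pi> (y!k) else P (y!(k-1)) (y!k))"

lemma block_chain_prob_snoc:
  "block_chain_prob P \<pi> m (y @ [c]) =
     block_chain_prob P \<pi> m y * (if length y mod m = 0 then \<pi> c else P (last y) c)"
proof -
  have "length y mod m \<noteq> 0 \<Longrightarrow> (y @ [c]) ! (length y - 1) = last y"
    by (cases "y = []") (auto simp: nth_append last_conv_nth)
  moreover have "(\<Prod>k<length y. if k mod m = 0 then \<pi> ((y @ [c])!k) else P ((y @ [c])!(k-1)) ((y @ [c])!k))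
      = (\<Prod>k<length y. if k mod m = 0 then \<pi> (y!k) else P (y!(k-1)) (y!k))"
    by (intro prod.cong) (auto simp: nth_append)
  ultimately show ?thesis
    unfolding block_chain_prob_def by (simp add: nth_append_length)
qed

lemma block_chain_prob_nonneg:
  "(\<And>a. 0 \<le> \<pi> a) \<Longrightarrow> (\<And>a b. 0 \<le> P a b) \<Longrightarrow> 0 \<le> block_chain_prob P \<pi> m y"
  unfolding block_chain_prob_def by (intro prod_nonneg) auto

locale markov_chain_kernel =
  fixes P :: "'a::finite \<Rightarrow> 'a \<Rightarrow> real"
  assumes markov: "markov_kernel P"
begin

lemma kernel_nonneg: "0 \<le> P a b"
  using markov by (simp add: markov_kernel_def)

lemma kernel_row_sum: "(\<Sum>c\<in>UNIV. P a c) = 1"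
  using markov by (simp add: markov_kernel_def)

lemma kernel_le_1: "P a b \<le> 1"
  using member_le_sum[of b UNIV "P a"] kernel_nonneg kernel_row_sum by simp

lemma kernel_eq_1_if_card_lt_2:
  assumes "CARD('a) < 2"
  shows "P a b = 1"
proof -
  have "0 < CARD('a)" by (simp add: finite_UNIV_card_ge_0)
  then have "CARD('a) = 1" using assms by linarith
  then obtain b0 :: 'a where univ: "UNIV = {b0}" by (metis card_1_singletonE)
  then have "a = b0" "b = b0" by auto
  moreover have "(\<Sum>c\<in>UNIV. P a c) = P a b0" by (simp add: univ)
  ultimately show ?thesis using kernel_row_sum[of a] by simp
qed

lemma entropy_rate_eq_0_if_card_lt_2: "CARD('a) < 2 \<Longrightarrow> entropy_rate P \<pi> = 0"
  by (simp add: entropy_rate_def kernel_eq_1_if_card_lt_2)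

end

locale stationary_chain = markov_chain_kernel +
  fixes \<pi> :: "'a::finite \<Rightarrow> real"
  assumes stationary: "stationary P \<pi>"
begin

lemma stationary_nonneg: "0 \<le> \<pi> a"
  using stationary by (simp add: stationary_def)

lemma stationary_sum: "(\<Sum>c\<in>UNIV. \<pi> c) = 1"
  using stationary by (simp add: stationary_def)

lemma stationary_balance: "(\<Sum>a\<in>UNIV. \<pi> a * P a c) = \<pi> c"
  using stationary by (simp add: stationary_def)

lemma block_chain_sum_last:
  "(\<Sum>y\<in>{y. length y = Suc k}. block_chain_prob P \<pi> m y * f (last y)) = (\<Sum>a\<in>UNIV. \<pi> a * f a)"
proof (induction k arbitrary: f)
  case 0
  show ?case by (subst sum_lists_length_Suc_Cons) (simp add: block_chain_prob_def)
next
  case (Suc k)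
  have total: "(\<Sum>y\<in>{y. length y = Suc k}. block_chain_prob P \<pi> m y) = 1"
    using Suc[of "\<lambda>_. 1"] stationary_sum by simp
  have "(\<Sum>y\<in>{y. length y = Suc (Suc k)}. block_chain_prob P \<pi> m y * f (last y)) =
     (\<Sum>y\<in>{y. length y = Suc k}. \<Sum>c\<in>UNIV. block_chain_prob P \<pi> m y *
        (if Suc k mod m = 0 then \<pi> c else P (last y) c) * f c)"
    by (subst sum_lists_length_Suc_snoc) (simp add: block_chain_prob_snoc)
  also have "\<dots> = (\<Sum>a\<in>UNIV. \<pi> a * f a)"
  proof (cases "Suc k mod m = 0")
    case True
    then show ?thesis
      by (simp add: mult.assoc sum_distrib_left[symmetric] sum_distrib_right[symmetric] total)
  next
    case False
    then have "(\<Sum>y\<in>{y. length y = Suc k}. \<Sum>c\<in>UNIV. block_chain_prob P \<pi> m y *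
        (if Suc k mod m = 0 then \<pi> c else P (last y) c) * f c) =
        (\<Sum>y\<in>{y. length y = Suc k}. block_chain_prob P \<pi> m y * (\<lambda>a. \<Sum>c\<in>UNIV. P a c * f c) (last y))"
      by (simp add: mult.assoc sum_distrib_left)
    also have "\<dots> = (\<Sum>a\<in>UNIV. \<pi> a * (\<Sum>c\<in>UNIV. P a c * f c))" by (rule Suc)
    also have "\<dots> = (\<Sum>c\<in>UNIV. (\<Sum>a\<in>UNIV. \<pi> a * P a c) * f c)"
      by (simp add: sum_distrib_left sum_distrib_right mult.assoc) (rule sum.swap)
    also have "\<dots> = (\<Sum>a\<in>UNIV. \<pi> a * f a)" by (simp add: stationary_balance)
    finally show ?thesis .
  qed
  finally show ?case .
qed

lemma block_chain_sum_1: "(\<Sum>y\<in>{y. length y = n}. block_chain_prob P \<pi> m y) = 1"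
  using block_chain_sum_last[where k = "n - 1" and m = m and f = "\<lambda>_. 1"] stationary_sum
  by (cases n) (simp_all add: block_chain_prob_def)

lemma block_chain_sum_take:
  assumes "n \<le> N"
  shows "(\<Sum>y\<in>{y. length y = N}. block_chain_prob P \<pi> m y * h (take n y)) =
         (\<Sum>y\<in>{y. length y = n}. block_chain_prob P \<pi> m y * h y)"
  using assms
proof (induction N)
  case (Suc N)
  show ?case
  proof (cases "n = Suc N")
    case False
    then have le: "n \<le> N" using Suc by simp
    have transition_sum: "(\<Sum>c\<in>UNIV. if N mod m = 0 then \<pi> c else P (last y) c) = 1" for y
      by (cases "N mod m = 0") (simp_all add: kernel_row_sum stationary_sum)
    have "(\<Sum>y\<in>{y. length y = Suc N}. block_chain_prob P \<pi> m y * h (take n y)) =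
      (\<Sum>y\<in>{y. length y = N}. block_chain_prob P \<pi> m y * h (take n y) *
        (\<Sum>c\<in>UNIV. if N mod m = 0 then \<pi> c else P (last y) c))"
      by (subst sum_lists_length_Suc_snoc)
         (simp add: block_chain_prob_snoc le sum_distrib_left mult_ac)
    also have "\<dots> = (\<Sum>y\<in>{y. length y = n}. block_chain_prob P \<pi> m y * h y)"
      using Suc.IH le by (simp only: transition_sum mult_1_right)
    finally show ?thesis .
  qed simp
qed simp

lemma block_chain_sum_pair:
  assumes "Suc k < N"
  shows "(\<Sum>y\<in>{y. length y = N}. block_chain_prob P \<pi> m y * g (y!k) (y!Suc k)) =
    (\<Sum>a\<in>UNIV. \<Sum>c\<in>UNIV. \<pi> a * (if Suc k mod m = 0 then \<pi> c else P a c) * g a c)"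
proof -
  have last_nth: "length y = Suc k \<Longrightarrow> last y = y!k" for y :: "'a list"
    by (cases y rule: rev_cases) (auto simp: nth_append)
  have "(\<Sum>y\<in>{y. length y = N}. block_chain_prob P \<pi> m y * g (y!k) (y!Suc k)) =
        (\<Sum>y\<in>{y. length y = N}. block_chain_prob P \<pi> m y * (\<lambda>z. g (z!k) (z!Suc k)) (take (Suc (Suc k)) y))"
    by simp
  also have "\<dots> = (\<Sum>y\<in>{y. length y = Suc (Suc k)}. block_chain_prob P \<pi> m y * g (y!k) (y!Suc k))"
    using assms by (subst block_chain_sum_take) auto
  also have "\<dots> = (\<Sum>y\<in>{y. length y = Suc k}. block_chain_prob P \<pi> m y * (\<lambda>a. \<Sum>c\<in>UNIV.
        (if Suc k mod m = 0 then \<pi> c else P a c) * g a c) (last y))"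
    by (subst sum_lists_length_Suc_snoc)
       (auto intro!: sum.cong simp: block_chain_prob_snoc nth_append last_nth sum_distrib_left mult_ac)
  also have "\<dots> = (\<Sum>a\<in>UNIV. \<pi> a * (\<Sum>c\<in>UNIV. (if Suc k mod m = 0 then \<pi> c else P a c) * g a c))"
    by (rule block_chain_sum_last)
  finally show ?thesis by (simp add: sum_distrib_left mult.assoc)
qed

end


definition array_chain :: "nat \<Rightarrow> (nat \<Rightarrow> nat \<Rightarrow> 'a) \<Rightarrow> nat \<Rightarrow> nat \<Rightarrow> 'a" where
  "array_chain s X j i = (if s = 1 then X i j else X j i)"

lemma concat_map_upt_grid:
  assumes "0 < m"
  shows "concat (map (\<lambda>j. map (f j) [0..<m]) [0..<n]) = map (\<lambda>k. f (k div m) (k mod m)) [0..<n*m]"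
proof (induction n)
  case (Suc n)
  have "[0..<Suc n * m] = [0..<n*m] @ [n*m..<n*m+m]"
    using upt_add_eq_append[of 0 "n*m" m] by (simp add: add.commute)
  moreover have "map (\<lambda>k. f (k div m) (k mod m)) [n*m..<n*m+m] = map (f n) [0..<m]"
    using assms by (intro nth_equalityI) simp_all
  ultimately show ?case using Suc.IH by simp
qed simp

lemma read_array_eq_map:
  assumes "0 < m" and "s \<in> {1, 2}"
  shows "read_array s m X = map (\<lambda>k. array_chain s X (k div m) (k mod m)) [0..<m*m]"
  using assms concat_map_upt_grid[OF assms(1), where n=m]
  unfolding read_array_def array_chain_def by (cases "s = 1") simp_all

lemma block_chain_prob_grid:
  assumes "0 < m"
  shows "block_chain_prob P \<pi> m (map (\<lambda>k. Y (k div m) (k mod m)) [0..<m*m]) =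
         (\<Prod>j<m. \<pi> (Y j 0) * (\<Prod>i<m - 1. P (Y j i) (Y j (Suc i))))"
proof -
  define e where "e k = (if k mod m = 0 then \<pi> (Y (k div m) (k mod m))
      else P (Y ((k-1) div m) ((k-1) mod m)) (Y (k div m) (k mod m)))" for k
  have block: "(\<Prod>k\<in>{j*m..<j*m+m}. e k) = \<pi> (Y j 0) * (\<Prod>i<m - 1. P (Y j i) (Y j (Suc i)))" for j
  proof -
    have "(\<Prod>k\<in>{j*m..<j*m+m}. e k) = (\<Prod>i<Suc (m-1). e (j*m+i))"
      using prod.shift_bounds_nat_ivl[of e 0 "j*m" m] assms
      by (simp add: atLeast0LessThan add.commute)
    also have "\<dots> = e (j*m) * (\<Prod>i<m-1. e (j*m + Suc i))"
      by (subst prod.lessThan_Suc_shift) simp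
    also have "(\<Prod>i<m-1. e (j*m + Suc i)) = (\<Prod>i<m - 1. P (Y j i) (Y j (Suc i)))"
    proof (intro prod.cong refl)
      fix i assume "i \<in> {..<m-1}"
      then have "Suc (j*m + i) div m = j" "Suc (j*m + i) mod m = Suc i" "(j*m + i) div m = j" "(j*m + i) mod m = i"
        by (simp_all flip: add_Suc_right)
      then show "e (j*m + Suc i) = P (Y j i) (Y j (Suc i))"
        by (simp add: e_def)
    qed
    finally show ?thesis using assms by (simp add: e_def)
  qed
  have "block_chain_prob P \<pi> m (map (\<lambda>k. Y (k div m) (k mod m)) [0..<m*m]) = (\<Prod>k<m*m. e k)"
    unfolding block_chain_prob_def e_def by (intro prod.cong) auto
  also have "\<dots> = (\<Prod>j<m. \<Prod>k\<in>{j*m..<j*m+m}. e k)"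
    by (rule prod.nat_group[symmetric])
  finally show ?thesis by (simp only: block)
qed

lemma array_prob_eq_block_chain_prob:
  assumes "0 < m" and "s \<in> {1, 2}"
  shows "array_prob s P \<pi> m X = block_chain_prob P \<pi> m (read_array s m X)"
proof -
  have "array_prob s P \<pi> m X =
      (\<Prod>j<m. \<pi> (array_chain s X j 0) * (\<Prod>i<m - 1. P (array_chain s X j i) (array_chain s X j (Suc i))))"
    using assms(2) by (auto simp: array_prob_def array_chain_def)
  then show ?thesis
    using assms by (simp add: read_array_eq_map block_chain_prob_grid)
qed

lemma nth_read_array:
  assumes "i < m" and "j < m" and "s \<in> {1, 2}"
  shows "read_array s m X ! (j*m + i) = array_chain s X j i"
proof -
  have "j*m + i < m*m"
    using assms mult_le_mono1[of "Suc j" m m] by simp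
  then show ?thesis
    using assms by (simp add: read_array_eq_map)
qed

lemma bij_betw_read_array:
  assumes "0 < m" and "s \<in> {1, 2}"
  shows "bij_betw (read_array s m) (arrays m) {y. length y = m*m}"
proof (rule bij_betwI')
  fix X Z :: "nat \<Rightarrow> nat \<Rightarrow> 'a" assume X: "X \<in> arrays m" and Z: "Z \<in> arrays m"
  show "(read_array s m X = read_array s m Z) = (X = Z)"
  proof
    assume eq: "read_array s m X = read_array s m Z"
    have "array_chain s X j i = array_chain s Z j i" if "i < m" "j < m" for i j
      using arg_cong[OF eq, of "\<lambda>y. y ! (j*m + i)"] that assms by (simp add: nth_read_array)
    then have "X i j = Z i j" if "i < m" "j < m" for i j
      using that assms by (cases "s = 1") (auto simp: array_chain_def)
    show "X = Z"
    proof (intro ext)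
      fix i j
      show "X i j = Z i j"
        using X Z \<open>\<And>i j. i < m \<Longrightarrow> j < m \<Longrightarrow> X i j = Z i j\<close>
        by (cases "i < m \<and> j < m") (auto simp: arrays_def)
    qed
  qed simp
next
  fix X assume "X \<in> arrays m"
  then show "read_array s m X \<in> {y. length y = m*m}"
    using assms by (simp add: read_array_eq_map)
next
  fix y :: "'a list" assume y: "y \<in> {y. length y = m*m}"
  define X where "X i j = (if i < m \<and> j < m then y ! (if s = 1 then j*m+i else i*m+j) else undefined)" for i j
  have "array_chain s X (k div m) (k mod m) = y ! k" if "k < m*m" for k
    using that assms by (simp add: array_chain_def X_def less_mult_imp_div_less)
  then have "read_array s m X = y"
    using assms y by (simp add: read_array_eq_map list_eq_iff_nth_eq)
  moreover have "X \<in> arrays m" by (simp add: arrays_def X_def)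
  ultimately show "\<exists>X\<in>arrays m. y = read_array s m X" by metis
qed


section \<open>Path weights and a Kraft inequality\<close>

fun path_weight :: "('a \<Rightarrow> 'a \<Rightarrow> real) \<Rightarrow> 'a list \<Rightarrow> real" where
  "path_weight P (x # y # r) = P x y * path_weight P (y # r)"
| "path_weight P _ = 1"

fun path_cost :: "('a \<Rightarrow> 'a \<Rightarrow> real) \<Rightarrow> 'a list \<Rightarrow> real" where
  "path_cost P (x # y # r) = - ln (P x y) + path_cost P (y # r)"
| "path_cost P _ = 0"

lemma path_weight_short: "length y \<le> 1 \<Longrightarrow> path_weight P y = 1"
  by (cases y) auto

lemma path_weight_snoc: "y \<noteq> [] \<Longrightarrow> path_weight P (y @ [c]) = path_weight P y * P (last y) c"
  by (induction y rule: induct_list012) auto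

lemma path_weight_append:
  "xs \<noteq> [] \<Longrightarrow> path_weight P (xs @ ys) = path_weight P xs * path_weight P (last xs # ys)"
  by (induction P xs rule: path_weight.induct) auto

lemma path_cost_eq_sum: "path_cost P y = (\<Sum>k<length y - 1. - ln (P (y!k) (y!Suc k)))"
proof (induction P y rule: path_cost.induct)
  case (1 P x y r)
  have "length (x # y # r) - 1 = Suc (length (y # r) - 1)" by simp
  then show ?case using 1 by (simp only: sum.lessThan_Suc_shift path_cost.simps) simp
qed auto

locale positive_kernel = markov_chain_kernel +
  assumes min_trans_pos: "0 < min_trans P"
begin

lemma min_trans_le: "min_trans P \<le> P a b"
proof -
  have "finite {P a a' |a a'. True}"
    using finite_imageI[of UNIV "\<lambda>(a, a'). P a a'"] by (simp add: image_def)
  then show ?thesis unfolding min_trans_def by (rule Min_le) auto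
qed

lemma kernel_pos: "0 < P a b"
  using min_trans_le[of a b] min_trans_pos by linarith

lemma card_mult_min_trans_le_1: "real CARD('a) * min_trans P \<le> 1"
proof -
  obtain a :: 'a where True by simp
  have "real CARD('a) * min_trans P = (\<Sum>c::'a\<in>UNIV. min_trans P)" by simp
  also have "\<dots> \<le> (\<Sum>c\<in>UNIV. P a c)" by (intro sum_mono min_trans_le)
  finally show ?thesis by (simp add: kernel_row_sum)
qed

lemma kernel_le_1_minus_min_trans:
  assumes "2 \<le> CARD('a)"
  shows "P a b \<le> 1 - min_trans P"
proof -
  obtain c :: 'a where cb: "c \<noteq> b"
  proof (rule ccontr)
    assume "\<not> thesis"
    with that have "(UNIV :: 'a set) = {b}" by auto
    then have "CARD('a) = 1" by (metis card.empty card_insert_disjoint empty_iff finite.emptyI One_nat_def)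
    with assms show False by simp
  qed
  have "P a b + P a c = (\<Sum>d\<in>{b, c}. P a d)" using cb by simp
  also have "\<dots> \<le> (\<Sum>d\<in>UNIV. P a d)" by (intro sum_mono2) (auto simp: kernel_nonneg)
  finally show ?thesis using min_trans_le[of a c] by (simp add: kernel_row_sum)
qed

lemma path_weight_pos: "0 < path_weight P y"
  by (induction y rule: induct_list012) (auto simp: kernel_pos)

lemma path_weight_le_1: "path_weight P y \<le> 1"
  by (induction y rule: induct_list012)
     (auto simp: kernel_le_1 kernel_pos path_weight_pos less_imp_le mult_le_one)

lemma path_cost_eq: "path_cost P y = - ln (path_weight P y)"
proof (induction y rule: induct_list012)
  case (3 x y zs)
  then show ?case using kernel_pos[of x y] path_weight_pos[of "y # zs"] by (simp add: ln_mult)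
qed auto

lemma path_cost_nonneg: "0 \<le> path_cost P y"
  by (simp add: path_cost_eq path_weight_le_1 path_weight_pos)

lemma path_cost_append_ge: "path_cost P xs + path_cost P ys \<le> path_cost P (xs @ ys)"
proof (induction xs rule: induct_list012)
  case (2 x)
  have "0 \<le> - ln (P x (hd ys))" using kernel_pos kernel_le_1 by simp
  then show ?case by (cases ys) auto
qed auto

lemma path_weight_le_geometric:
  "2 \<le> CARD('a) \<Longrightarrow> path_weight P y \<le> (1 - min_trans P) ^ (length y - 1)"
proof (induction y rule: induct_list012)
  case (3 x y zs)
  then show ?case
    using kernel_le_1_minus_min_trans[of x y] path_weight_pos[of "y # zs"] kernel_pos[of x y]
    by (auto intro!: mult_mono simp: less_imp_le)
qed auto

lemma heavy_path_length_bound: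
  assumes "2 \<le> CARD('a)" and "0 < \<tau>"
  obtains L where "\<And>y. \<tau> \<le> path_weight P y \<Longrightarrow> length y \<le> L"
proof -
  obtain a :: 'a where True by simp
  have \<delta>: "0 < min_trans P" "min_trans P \<le> 1"
    using min_trans_pos min_trans_le[of a a] kernel_le_1[of a a] by auto
  obtain L where L: "(1 - min_trans P) ^ L < \<tau>"
    using real_arch_pow_inv[OF assms(2), of "1 - min_trans P"] \<delta> by auto
  have "length y \<le> L" if "\<tau> \<le> path_weight P y" for y
  proof (rule ccontr)
    assume "\<not> length y \<le> L"
    then have "(1 - min_trans P) ^ (length y - 1) \<le> (1 - min_trans P) ^ L"
      using \<delta> by (intro power_decreasing) auto
    then show False
      using that L path_weight_le_geometric[OF assms(1), of y] by linarith
  qed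
  then show ?thesis using that by blast
qed

lemma sum_path_weight_extensions:
  "t \<noteq> [] \<Longrightarrow> (\<Sum>u\<in>{u. length u = n}. path_weight P (t @ u)) = path_weight P t"
proof (induction n)
  case (Suc n)
  have "(\<Sum>u\<in>{u. length u = Suc n}. path_weight P (t @ u)) =
        (\<Sum>u\<in>{u. length u = n}. path_weight P (t @ u) * (\<Sum>c\<in>UNIV. P (last (t @ u)) c))"
    using Suc.prems
    by (subst sum_lists_length_Suc_snoc) (simp add: path_weight_snoc[symmetric] sum_distrib_left)
  then show ?case using Suc by (simp add: kernel_row_sum)
qed simp

text \<open>Kraft's inequality for a prefix-free set of words, with the path weight in place of
  \<open>|C|^-length\<close>: each word owns the disjoint set of its extensions to a common length.\<close>

lemma prefix_free_path_weight_sum_le: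
  assumes fin: "finite S" and ne: "\<And>t. t \<in> S \<Longrightarrow> t \<noteq> []"
    and len: "\<And>t. t \<in> S \<Longrightarrow> length t \<le> Suc M"
    and prefix_free: "\<And>t v. t \<in> S \<Longrightarrow> t @ v \<in> S \<Longrightarrow> v = []"
  shows "(\<Sum>t\<in>S. path_weight P t) \<le> real CARD('a)"
proof -
  define E where "E t = (\<lambda>u. t @ u) ` {u. length u = Suc M - length t}" for t :: "'a list"
  have finE: "finite (E t)" for t unfolding E_def by (simp add: finite_lists_length)
  have sum_E: "(\<Sum>s\<in>E t. path_weight P s) = path_weight P t" if "t \<in> S" for t
    unfolding E_def using ne[OF that]
    by (subst sum.reindex) (auto simp: inj_on_def sum_path_weight_extensions)
  have disj: "E t \<inter> E t' = {}" if "t \<in> S" "t' \<in> S" "t \<noteq> t'" for t t'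
  proof (rule ccontr)
    assume "E t \<inter> E t' \<noteq> {}"
    then obtain u u' where "t @ u = t' @ u'" unfolding E_def by blast
    then obtain v where "t' = t @ v \<or> t = t' @ v" by (metis append_eq_append_conv2)
    then show False using prefix_free that by auto
  qed
  have "(\<Sum>t\<in>S. path_weight P t) = (\<Sum>s\<in>(\<Union>t\<in>S. E t). path_weight P s)"
    using disj fin finE sum_E by (subst sum.UNION_disjoint) auto
  also have "\<dots> \<le> (\<Sum>s\<in>{s. length s = Suc M}. path_weight P s)"
    using len path_weight_pos
    by (intro sum_mono2) (auto simp: E_def finite_lists_length less_imp_le)
  also have "\<dots> = real CARD('a)"
    by (subst sum_lists_length_Suc_Cons) (simp add: sum_path_weight_extensions[of "[_]", simplified])
  finally show ?thesis .
qed

end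


section \<open>Tunstall leaves and the greedy parse\<close>

definition tunstall_leaves :: "('a \<Rightarrow> 'a \<Rightarrow> real) \<Rightarrow> real \<Rightarrow> 'a list set" where
  "tunstall_leaves P \<tau> = {t. 2 \<le> length t \<and> \<tau> \<le> path_weight P (butlast t) \<and> path_weight P t < \<tau>}"

definition first_cut :: "('a \<Rightarrow> 'a \<Rightarrow> real) \<Rightarrow> real \<Rightarrow> 'a list \<Rightarrow> nat" where
  "first_cut P \<tau> y = (LEAST k. 0 < k \<and> path_weight P (take k y) < \<tau>)"

text \<open>Split off the shortest prefix of weight below \<open>\<tau>\<close> as long as there is one, then emit the
  rest letter by letter; \<open>n\<close> only bounds the recursion depth.\<close>

fun greedy_parse :: "('a \<Rightarrow> 'a \<Rightarrow> real) \<Rightarrow> real \<Rightarrow> nat \<Rightarrow> 'a list \<Rightarrow> 'a list list" where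
  "greedy_parse P \<tau> 0 y = map (\<lambda>x. [x]) y"
| "greedy_parse P \<tau> (Suc n) y =
     (if \<exists>k. 0 < k \<and> k \<le> length y \<and> path_weight P (take k y) < \<tau>
      then take (first_cut P \<tau> y) y # greedy_parse P \<tau> n (drop (first_cut P \<tau> y) y)
      else map (\<lambda>x. [x]) y)"

lemma concat_greedy_parse: "concat (greedy_parse P \<tau> n y) = y"
proof (induction n arbitrary: y)
  case 0
  show ?case by (induction y) auto
qed simp

locale tunstall_threshold = positive_kernel +
  fixes \<tau> :: real
  assumes threshold_pos: "0 < \<tau>" and threshold_lt_1: "\<tau> < 1"
begin

lemma threshold_le_1: "\<tau> \<le> 1"
  using threshold_lt_1 by simp

lemma tunstall_leaves_nonempty: "t \<in> tunstall_leaves P \<tau> \<Longrightarrow> t \<noteq> []"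
  by (auto simp: tunstall_leaves_def)

lemma tunstall_leaves_prefix_free:
  assumes t: "t \<in> tunstall_leaves P \<tau>" and tv: "t @ v \<in> tunstall_leaves P \<tau>"
  shows "v = []"
proof (rule ccontr)
  assume v: "v \<noteq> []"
  have "path_weight P (butlast (t @ v)) = path_weight P t * path_weight P (last t # butlast v)"
    using v tunstall_leaves_nonempty[OF t] by (simp add: butlast_append path_weight_append)
  also have "\<dots> \<le> path_weight P t"
    using path_weight_le_1 path_weight_pos by (simp add: mult_left_le less_imp_le)
  also have "\<dots> < \<tau>" using t by (simp add: tunstall_leaves_def)
  finally show False using tv by (simp add: tunstall_leaves_def)
qed

lemma tunstall_leaf_weight_ge:
  assumes t: "t \<in> tunstall_leaves P \<tau>"
  shows "\<tau> * min_trans P \<le> path_weight P t"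
proof -
  have "1 \<le> length (butlast t)" using t by (auto simp: tunstall_leaves_def)
  then have ne: "butlast t \<noteq> []" by (metis le_zero_eq list.size(3) one_neq_zero)
  have "t = butlast t @ [last t]" using ne by (metis append_butlast_last_id butlast.simps(1))
  then have "path_weight P t = path_weight P (butlast t) * P (last (butlast t)) (last t)"
    using path_weight_snoc[OF ne] by metis
  moreover have "\<tau> \<le> path_weight P (butlast t)" using t by (simp add: tunstall_leaves_def)
  ultimately show ?thesis
    using min_trans_le threshold_pos min_trans_pos by (simp add: mult_mono)
qed

lemma tunstall_leaves_empty_if_card_lt_2:
  assumes "CARD('a) < 2"
  shows "tunstall_leaves P \<tau> = {}"
proof -
  have "path_weight P y = 1" for y
    using assms by (induction y rule: induct_list012) (auto simp: kernel_eq_1_if_card_lt_2)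
  then show ?thesis by (simp add: tunstall_leaves_def)
qed

lemma tunstall_leaves_bounded:
  obtains M where "finite (tunstall_leaves P \<tau>)" "\<And>t. t \<in> tunstall_leaves P \<tau> \<Longrightarrow> length t \<le> Suc M"
proof (cases "2 \<le> CARD('a)")
  case True
  then obtain L where L: "\<And>y. \<tau> \<le> path_weight P y \<Longrightarrow> length y \<le> L"
    using heavy_path_length_bound threshold_pos by blast
  then have len: "length t \<le> Suc L" if "t \<in> tunstall_leaves P \<tau>" for t
    using that by (fastforce simp: tunstall_leaves_def)
  have "tunstall_leaves P \<tau> \<subseteq> {xs. set xs \<subseteq> UNIV \<and> length xs \<le> Suc L}" using len by auto
  then have "finite (tunstall_leaves P \<tau>)"
    by (rule finite_subset) (rule finite_lists_length_le, simp)
  with len show ?thesis using that by blast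
next
  case False
  then show ?thesis using that tunstall_leaves_empty_if_card_lt_2 by simp
qed

lemma finite_tunstall_leaves: "finite (tunstall_leaves P \<tau>)"
  using tunstall_leaves_bounded by metis

lemma sum_tunstall_leaves_weight_le: "(\<Sum>t\<in>tunstall_leaves P \<tau>. path_weight P t) \<le> real CARD('a)"
proof -
  obtain M where "finite (tunstall_leaves P \<tau>)" "\<And>t. t \<in> tunstall_leaves P \<tau> \<Longrightarrow> length t \<le> Suc M"
    using tunstall_leaves_bounded by blast
  then show ?thesis
    using prefix_free_path_weight_sum_le tunstall_leaves_nonempty tunstall_leaves_prefix_free by blast
qed

lemma card_tunstall_leaves_le: "real (card (tunstall_leaves P \<tau>)) * (\<tau> * min_trans P) \<le> real CARD('a)"
proof -
  have "real (card (tunstall_leaves P \<tau>)) * (\<tau> * min_trans P) = (\<Sum>t\<in>tunstall_leaves P \<tau>. \<tau> * min_trans P)"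
    by simp
  also have "\<dots> \<le> (\<Sum>t\<in>tunstall_leaves P \<tau>. path_weight P t)"
    by (intro sum_mono tunstall_leaf_weight_ge)
  finally show ?thesis using sum_tunstall_leaves_weight_le by linarith
qed

lemma first_cut_leaf:
  assumes "\<exists>k. 0 < k \<and> k \<le> length y \<and> path_weight P (take k y) < \<tau>"
  shows "0 < first_cut P \<tau> y" and "first_cut P \<tau> y \<le> length y"
    and "take (first_cut P \<tau> y) y \<in> tunstall_leaves P \<tau>"
proof -
  obtain k where k: "0 < k" "k \<le> length y" "path_weight P (take k y) < \<tau>" using assms by blast
  let ?c = "first_cut P \<tau> y"
  have c: "0 < ?c \<and> path_weight P (take ?c y) < \<tau>"
    unfolding first_cut_def by (rule LeastI_ex) (use k in blast)
  then show "0 < ?c" ..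
  have "?c \<le> k" unfolding first_cut_def by (rule Least_le) (use k in blast)
  then show c_le: "?c \<le> length y" using k by simp
  have c2: "2 \<le> ?c"
    using c path_weight_short[of "take ?c y" P] threshold_le_1 c_le by (cases "?c \<le> 1") auto
  have "\<not> (0 < ?c - 1 \<and> path_weight P (take (?c - 1) y) < \<tau>)"
    unfolding first_cut_def by (rule not_less_Least) (use c2 in \<open>simp add: first_cut_def\<close>)
  then show "take ?c y \<in> tunstall_leaves P \<tau>"
    using c c2 c_le by (simp add: tunstall_leaves_def butlast_take)
qed

lemma set_greedy_parse: "set (greedy_parse P \<tau> n y) \<subseteq> tunstall_leaves P \<tau> \<union> range (\<lambda>x. [x])"
proof (induction n arbitrary: y)
  case (Suc n)
  then show ?case using first_cut_leaf(3)[of y] by auto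
qed auto

lemma greedy_parse_cost_le:
  assumes "0 \<le> \<gamma>"
    and leaf: "\<And>t. t \<in> tunstall_leaves P \<tau> \<Longrightarrow> cost t \<le> (1 + \<gamma>) * path_cost P t"
    and letter: "\<And>x. cost [x] = c"
    and remainder: "\<And>y. \<tau> \<le> path_weight P y \<Longrightarrow> real (length y) * c \<le> R"
    and "length y \<le> n"
  shows "sum_list (map cost (greedy_parse P \<tau> n y)) \<le> (1 + \<gamma>) * path_cost P y + R"
  using \<open>length y \<le> n\<close>
proof (induction n arbitrary: y)
  case 0
  then show ?case using remainder[of "[]"] threshold_le_1 by simp
next
  case (Suc n)
  show ?case
  proof (cases "\<exists>k. 0 < k \<and> k \<le> length y \<and> path_weight P (take k y) < \<tau>")
    case True
    let ?c = "first_cut P \<tau> y"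
    have "sum_list (map cost (greedy_parse P \<tau> n (drop ?c y))) \<le>
        (1 + \<gamma>) * path_cost P (drop ?c y) + R"
      using Suc first_cut_leaf(1)[OF True] by (intro Suc.IH) auto
    moreover have "(1 + \<gamma>) * (path_cost P (take ?c y) + path_cost P (drop ?c y)) \<le> (1 + \<gamma>) * path_cost P y"
      using path_cost_append_ge[of "take ?c y" "drop ?c y"] \<open>0 \<le> \<gamma>\<close> by (simp add: mult_left_mono)
    ultimately show ?thesis
      using True leaf[OF first_cut_leaf(3)[OF True]] by (simp add: distrib_left)
  next
    case False
    have "\<tau> \<le> path_weight P y"
      using False[simplified, rule_format, of "length y"] threshold_le_1 by (cases "y = []") auto
    moreover have "sum_list (map cost (map (\<lambda>x. [x]) y)) = real (length y) * c"
      by (induction y) (auto simp: letter algebra_simps)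
    ultimately have "sum_list (map cost (map (\<lambda>x. [x]) y)) \<le> R"
      using remainder by simp
    moreover have "greedy_parse P \<tau> (Suc n) y = map (\<lambda>x. [x]) y"
      using False by (simp only: greedy_parse.simps if_not_P if_False)
    moreover have "0 \<le> (1 + \<gamma>) * path_cost P y"
      using path_cost_nonneg[of y] \<open>0 \<le> \<gamma>\<close> by simp
    ultimately show ?thesis by (simp del: map_map)
  qed
qed

end


text \<open>The leaves get \<open>999/1000\<close> of the mass the Kraft bound allows them; the single letters
  share the rest evenly, so each letter has positive probability.\<close>

definition letter_prob :: "('a::finite \<Rightarrow> 'a \<Rightarrow> real) \<Rightarrow> real \<Rightarrow> real" where
  "letter_prob P \<tau> =
     (1 - 999/1000 * (\<Sum>u\<in>tunstall_leaves P \<tau>. path_weight P u) / CARD('a)) / CARD('a)"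

definition token_prob :: "('a::finite \<Rightarrow> 'a \<Rightarrow> real) \<Rightarrow> real \<Rightarrow> 'a list \<Rightarrow> real" where
  "token_prob P \<tau> t =
     (if t \<in> tunstall_leaves P \<tau> then 999/1000 * path_weight P t / CARD('a) else letter_prob P \<tau>)"

lemma ln_token_overhead_nonneg: "0 \<le> ln (1000/999 * real CARD('a::finite))"
proof -
  have "1 \<le> real CARD('a)" by (simp add: Suc_le_eq finite_UNIV_card_ge_0)
  then have "1 \<le> 1000/999 * real CARD('a)" by linarith
  then show ?thesis by simp
qed

definition tunstall_dict :: "('a \<Rightarrow> 'a \<Rightarrow> real) \<Rightarrow> real \<Rightarrow> 'a list set" where
  "tunstall_dict P \<tau> = tunstall_leaves P \<tau> \<union> range (\<lambda>x. [x])"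

context tunstall_threshold
begin

lemma letter_prob_bounds: "0 < letter_prob P \<tau>" "letter_prob P \<tau> \<le> 1"
proof -
  define C where "C = real CARD('a)"
  have C: "1 \<le> C" unfolding C_def by (simp add: Suc_le_eq finite_UNIV_card_ge_0)
  define S where "S = (\<Sum>u\<in>tunstall_leaves P \<tau>. path_weight P u)"
  have "0 \<le> S" unfolding S_def by (simp add: sum_nonneg less_imp_le path_weight_pos)
  moreover have "S \<le> C" unfolding S_def C_def by (rule sum_tunstall_leaves_weight_le)
  ultimately have "0 < 1 - 999/1000 * S / C" "1 - 999/1000 * S / C \<le> 1"
    using C by (simp_all add: field_simps)
  then show "0 < letter_prob P \<tau>" "letter_prob P \<tau> \<le> 1"
    using C unfolding letter_prob_def S_def[symmetric] C_def[symmetric] by (simp_all add: divide_le_eq)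
qed

lemma token_prob_pos: "0 < token_prob P \<tau> t"
  by (simp add: token_prob_def path_weight_pos letter_prob_bounds)

lemma sum_token_prob: "(\<Sum>t\<in>tunstall_dict P \<tau>. token_prob P \<tau> t) = 1"
proof -
  have C: "1 \<le> real CARD('a)" by (simp add: Suc_le_eq finite_UNIV_card_ge_0)
  have "tunstall_leaves P \<tau> \<inter> range (\<lambda>x. [x]) = {}" by (auto simp: tunstall_leaves_def)
  then have "(\<Sum>t\<in>tunstall_dict P \<tau>. token_prob P \<tau> t) =
      (\<Sum>t\<in>tunstall_leaves P \<tau>. token_prob P \<tau> t) + (\<Sum>t\<in>range (\<lambda>x. [x]). token_prob P \<tau> t)"
    unfolding tunstall_dict_def by (intro sum.union_disjoint) (auto simp: finite_tunstall_leaves)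
  also have "(\<Sum>t\<in>range (\<lambda>x. [x]). token_prob P \<tau> t) = real CARD('a) * letter_prob P \<tau>"
    by (subst sum.reindex) (auto simp: inj_on_def token_prob_def tunstall_leaves_def)
  also have "(\<Sum>t\<in>tunstall_leaves P \<tau>. token_prob P \<tau> t) =
      999/1000 * (\<Sum>u\<in>tunstall_leaves P \<tau>. path_weight P u) / CARD('a)"
    by (simp add: token_prob_def sum_divide_distrib sum_distrib_left)
  finally show ?thesis using C by (simp add: letter_prob_def)
qed

lemma leaf_token_cost_le:
  assumes t: "t \<in> tunstall_leaves P \<tau>"
  shows "- ln (token_prob P \<tau> t) \<le> (1 + ln (1000/999 * CARD('a)) / - ln \<tau>) * path_cost P t"
proof -
  define c where "c = ln (1000/999 * CARD('a))"
  have w: "0 < path_weight P t" "path_weight P t < \<tau>"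
    using path_weight_pos t by (auto simp: tunstall_leaves_def)
  have c: "0 \<le> c" unfolding c_def by (rule ln_token_overhead_nonneg)
  have T: "0 < - ln \<tau>" using threshold_pos threshold_lt_1 by simp
  have "- ln (token_prob P \<tau> t) = path_cost P t + c"
    using t w unfolding token_prob_def c_def path_cost_eq
    by (simp add: ln_mult ln_div finite_UNIV_card_ge_0)
  moreover have "- ln \<tau> < path_cost P t"
    unfolding path_cost_eq using w by simp
  then have "c * - ln \<tau> \<le> c * path_cost P t"
    using c by (intro mult_left_mono) auto
  then have "c \<le> c / - ln \<tau> * path_cost P t"
    using T by (simp add: field_simps)
  ultimately show ?thesis by (simp add: c_def algebra_simps)
qed

lemma letter_cost_remainder_bound:
  obtains R where "\<And>y. \<tau> \<le> path_weight P y \<Longrightarrow> real (length y) * - ln (letter_prob P \<tau>) \<le> R"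
proof (cases "2 \<le> CARD('a)")
  case True
  then obtain L where "\<And>y. \<tau> \<le> path_weight P y \<Longrightarrow> length y \<le> L"
    using heavy_path_length_bound threshold_pos by blast
  moreover have "0 \<le> - ln (letter_prob P \<tau>)" using letter_prob_bounds by simp
  ultimately have "real (length y) * - ln (letter_prob P \<tau>) \<le> real L * - ln (letter_prob P \<tau>)"
    if "\<tau> \<le> path_weight P y" for y
    using that by (intro mult_right_mono) auto
  then show ?thesis using that by blast
next
  case False
  moreover have "0 < CARD('a)" by (simp add: finite_UNIV_card_ge_0)
  ultimately have "CARD('a) = 1" by linarith
  then have "letter_prob P \<tau> = 1"
    using tunstall_leaves_empty_if_card_lt_2 False by (simp add: letter_prob_def)
  then show ?thesis using that[of 0] by simp
qed

end


section \<open>Expected path cost of an array\<close>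

lemma card_block_boundaries_le: "card {k\<in>{..<m*m - 1}. Suc k mod m = 0} \<le> m"
proof -
  have "{k\<in>{..<m*m - 1}. Suc k mod m = 0} \<subseteq> (\<lambda>j. Suc j * m - 1) ` {..<m}"
  proof
    fix k assume k: "k \<in> {k\<in>{..<m*m - 1}. Suc k mod m = 0}"
    define q where "q = Suc k div m"
    have sk: "Suc k = q * m" using k by (simp add: q_def) (metis div_mult_mod_eq add_0_right)
    then have "0 < q" by (cases q) auto
    have "Suc k < m * m" using k by auto
    then have "q * m < m * m" using sk by simp
    then have "q < m" by (simp add: mult_less_cancel2)
    then show "k \<in> (\<lambda>j. Suc j * m - 1) ` {..<m}"
      using sk \<open>0 < q\<close> by (intro image_eqI[where x="q - 1"]) auto
  qed
  then have "card {k\<in>{..<m*m - 1}. Suc k mod m = 0} \<le> card ((\<lambda>j. Suc j * m - 1) ` {..<m})"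
    by (intro card_mono) auto
  also have "\<dots> \<le> m" using card_image_le[of "{..<m}" "\<lambda>j. Suc j * m - 1"] by simp
  finally show ?thesis .
qed

locale positive_stationary_chain = stationary_chain + positive_kernel
begin

lemma neg_ln_kernel_bounds: "0 \<le> - ln (P a c)" "- ln (P a c) \<le> - ln (min_trans P)"
  using kernel_le_1[of a c] kernel_pos[of a c] min_trans_le[of a c] min_trans_pos by simp_all

lemma entropy_rate_nonneg: "0 \<le> entropy_rate P \<pi>"
proof -
  have "0 \<le> (\<Sum>a\<in>UNIV. \<Sum>a'\<in>UNIV. \<pi> a * P a a' * - ln (P a a'))"
    using stationary_nonneg kernel_nonneg neg_ln_kernel_bounds by (intro sum_nonneg mult_nonneg_nonneg) auto
  then show ?thesis by (simp add: entropy_rate_def sum_negf)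
qed

text \<open>Inside a block a transition costs \<open>H\<close> on average; across a block boundary the two
  letters are independent and the transition costs at most \<open>ln (1 / \<delta>)\<close>.\<close>

lemma expected_transition_cost_le:
  "(\<Sum>a\<in>UNIV. \<Sum>c\<in>UNIV. \<pi> a * (if B then \<pi> c else P a c) * - ln (P a c))
    \<le> entropy_rate P \<pi> + (if B then - ln (min_trans P) else 0)"
proof (cases B)
  case True
  have "(\<Sum>a\<in>UNIV. \<Sum>c\<in>UNIV. \<pi> a * \<pi> c * - ln (P a c)) \<le>
        (\<Sum>a\<in>UNIV. \<Sum>c\<in>UNIV. \<pi> a * \<pi> c * - ln (min_trans P))"
    using stationary_nonneg neg_ln_kernel_bounds by (intro sum_mono mult_left_mono) auto
  also have "\<dots> = (\<Sum>a\<in>UNIV. \<pi> a) * (\<Sum>c\<in>UNIV. \<pi> c) * - ln (min_trans P)"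
    by (simp add: sum_distrib_right sum_distrib_left mult_ac)
  finally show ?thesis using True entropy_rate_nonneg by (simp add: stationary_sum)
qed (simp add: entropy_rate_def sum_negf)

lemma expected_path_cost_le:
  "(\<Sum>y\<in>{y. length y = m*m}. block_chain_prob P \<pi> m y * path_cost P y)
     \<le> real (m*m) * entropy_rate P \<pi> + real m * - ln (min_trans P)"
proof -
  let ?N = "m*m" and ?H = "entropy_rate P \<pi>" and ?b = "- ln (min_trans P)"
  have b: "0 \<le> ?b" using neg_ln_kernel_bounds by (meson order_trans)
  have "(\<Sum>y\<in>{y. length y = ?N}. block_chain_prob P \<pi> m y * path_cost P y) =
        (\<Sum>k<?N - 1. \<Sum>y\<in>{y. length y = ?N}. block_chain_prob P \<pi> m y * - ln (P (y!k) (y!Suc k)))"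
    by (simp add: path_cost_eq_sum sum_distrib_left sum.swap[of _ "{..<_}"])
  also have "\<dots> = (\<Sum>k<?N - 1. \<Sum>a\<in>UNIV. \<Sum>c\<in>UNIV.
      \<pi> a * (if Suc k mod m = 0 then \<pi> c else P a c) * - ln (P a c))"
    by (intro sum.cong refl block_chain_sum_pair) auto
  also have "\<dots> \<le> (\<Sum>k<?N - 1. ?H + (if Suc k mod m = 0 then ?b else 0))"
    by (intro sum_mono expected_transition_cost_le)
  also have "\<dots> = real (?N - 1) * ?H + real (card {k\<in>{..<?N - 1}. Suc k mod m = 0}) * ?b"
    by (simp add: sum.distrib sum.inter_filter[symmetric])
  also have "\<dots> \<le> real ?N * ?H + real m * ?b"
    using card_block_boundaries_le[of m] b entropy_rate_nonneg of_nat_mono[of "?N - 1" ?N]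
    by (intro add_mono mult_right_mono) auto
  finally show ?thesis .
qed

lemma sum_arrays_eq_sum_block_chain:
  assumes "0 < m" and "s \<in> {1, 2}"
  shows "(\<Sum>X\<in>arrays m. array_prob s P \<pi> m X * f (read_array s m X)) =
         (\<Sum>y\<in>{y. length y = m*m}. block_chain_prob P \<pi> m y * f y)"
  using sum.reindex_bij_betw[OF bij_betw_read_array[OF assms], of "\<lambda>y. block_chain_prob P \<pi> m y * f y"]
  by (simp add: array_prob_eq_block_chain_prob[OF assms])

end


definition uniform_length :: "nat \<Rightarrow> nat \<Rightarrow> real" where
  "uniform_length N n = (if n \<le> N then 1 / (real N + 1) else 0)"

lemma uniform_length_unigram_model:
  assumes "\<And>t. t \<in> Dict \<Longrightarrow> 0 \<le> qt t" and "(\<Sum>t\<in>Dict. qt t) = 1"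
  shows "(uniform_length N, qt) \<in> unigram_models Dict"
proof -
  have sums: "uniform_length N sums (\<Sum>n\<le>N. uniform_length N n)"
    by (rule sums_finite) (auto simp: uniform_length_def)
  have "real N + 1 \<noteq> 0" by linarith
  then have "(\<Sum>n\<le>N. uniform_length N n) = 1"
    by (simp add: uniform_length_def field_simps)
  with sums have "uniform_length N sums 1" by (simp only:)
  then show ?thesis
    using assms by (auto simp: unigram_models_def uniform_length_def)
qed

lemma neg_log_unigram_prob_uniform_length:
  assumes "length ts \<le> N" and "\<And>t. 0 < qt t"
  shows "neg_log (unigram_prob (uniform_length N, qt) ts) = ereal (ln (real N + 1) + (\<Sum>t\<leftarrow>ts. - ln (qt t)))"
proof -
  have "0 < prod_list (map qt ts) \<and> ln (prod_list (map qt ts)) = (\<Sum>t\<leftarrow>ts. ln (qt t))"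
  proof (induction ts)
    case (Cons t ts)
    then show ?case using assms(2)[of t] by (simp add: ln_mult)
  qed simp
  moreover have "(\<Sum>t\<leftarrow>ts. - ln (qt t)) = - (\<Sum>t\<leftarrow>ts. ln (qt t))"
    by (induction ts) auto
  ultimately show ?thesis
    using assms(1) by (simp add: neg_log_def unigram_prob_def uniform_length_def ln_mult ln_div add_pos_nonneg)
qed

lemma best_unigram_loss_le:
  assumes "Q \<in> unigram_models Dict"
    and "\<And>X. X \<in> arrays m \<Longrightarrow> neg_log (unigram_prob Q (enc X)) \<le> ereal (cost X)"
    and "\<And>X. 0 \<le> array_prob s P \<pi> m X"
  shows "best_unigram_loss s P \<pi> Dict enc m \<le>
           ereal ((\<Sum>X\<in>arrays m. array_prob s P \<pi> m X * cost X) / (real m)^2)"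
proof -
  have "best_unigram_loss s P \<pi> Dict enc m \<le>
      ereal (1 / (real m)^2) * (\<Sum>X\<in>arrays m. ereal (array_prob s P \<pi> m X) * neg_log (unigram_prob Q (enc X)))"
    unfolding best_unigram_loss_def by (rule INF_lower[OF assms(1)])
  also have "\<dots> \<le> ereal (1 / (real m)^2) * (\<Sum>X\<in>arrays m. ereal (array_prob s P \<pi> m X * cost X))"
    using assms(2,3)
    by (intro ereal_mult_left_mono sum_mono) (auto intro!: ereal_mult_left_mono simp flip: times_ereal.simps)
  finally show ?thesis by (simp add: sum_ereal)
qed

lemma length_le_length_concat: "(\<And>t. t \<in> set ts \<Longrightarrow> t \<noteq> []) \<Longrightarrow> length ts \<le> length (concat ts)"
proof (induction ts)
  case (Cons t ts)
  then show ?case by (cases t) auto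
qed simp

definition tunstall_encoding :: "('a \<Rightarrow> 'a \<Rightarrow> real) \<Rightarrow> real \<Rightarrow> nat \<Rightarrow> nat \<Rightarrow> (nat \<Rightarrow> nat \<Rightarrow> 'a) \<Rightarrow> 'a list list" where
  "tunstall_encoding P \<tau> s m X = greedy_parse P \<tau> (m*m) (read_array s m X)"

lemma (in tunstall_threshold) tunstall_code_length_le:
  assumes remainder: "\<And>y. \<tau> \<le> path_weight P y \<Longrightarrow> real (length y) * - ln (letter_prob P \<tau>) \<le> R"
    and "length y = N"
  shows "neg_log (unigram_prob (uniform_length N, token_prob P \<tau>) (greedy_parse P \<tau> N y))
    \<le> ereal (ln (real N + 1) + R + (1 + ln (1000/999 * CARD('a)) / - ln \<tau>) * path_cost P y)"
proof -
  have "length (greedy_parse P \<tau> N y) \<le> length (concat (greedy_parse P \<tau> N y))"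
    using set_greedy_parse tunstall_leaves_nonempty by (intro length_le_length_concat) blast
  then have "length (greedy_parse P \<tau> N y) \<le> N"
    using assms(2) by (simp add: concat_greedy_parse)
  moreover have "0 \<le> ln (1000/999 * real CARD('a)) / - ln \<tau>"
    using threshold_pos threshold_lt_1 by (intro divide_nonneg_pos ln_token_overhead_nonneg) simp
  then have "(\<Sum>t\<leftarrow>greedy_parse P \<tau> N y. - ln (token_prob P \<tau> t)) \<le>
      (1 + ln (1000/999 * CARD('a)) / - ln \<tau>) * path_cost P y + R"
    using leaf_token_cost_le remainder assms(2)
    by (intro greedy_parse_cost_le) (auto simp: token_prob_def tunstall_leaves_def)
  ultimately show ?thesis
    by (simp add: neg_log_unigram_prob_uniform_length token_prob_pos)
qed

context tunstall_threshold
begin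

lemma tunstall_encoding_tokens:
  shows "set (tunstall_encoding P \<tau> s m X) \<subseteq> tunstall_dict P \<tau>"
    and "concat (tunstall_encoding P \<tau> s m X) = read_array s m X"
  using set_greedy_parse by (simp_all add: tunstall_encoding_def tunstall_dict_def concat_greedy_parse)

lemma tunstall_dict_nonempty: "t \<in> tunstall_dict P \<tau> \<Longrightarrow> t \<noteq> []"
  by (auto simp: tunstall_dict_def dest: tunstall_leaves_nonempty)

lemma finite_tunstall_dict: "finite (tunstall_dict P \<tau>)"
  by (simp add: tunstall_dict_def finite_tunstall_leaves)

lemma card_tunstall_dict_le:
  "real (card (tunstall_dict P \<tau>)) \<le> real CARD('a) / (\<tau> * min_trans P) + real CARD('a)"
proof -
  have "card (tunstall_dict P \<tau>) \<le> card (tunstall_leaves P \<tau>) + card (range (\<lambda>x::'a. [x]))"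
    unfolding tunstall_dict_def by (rule card_Un_le)
  moreover have "card (range (\<lambda>x::'a. [x])) = CARD('a)" by (simp add: card_image inj_on_def)
  moreover have "real (card (tunstall_leaves P \<tau>)) \<le> real CARD('a) / (\<tau> * min_trans P)"
    using card_tunstall_leaves_le threshold_pos min_trans_pos by (simp add: le_divide_eq)
  ultimately show ?thesis by linarith
qed

end

locale tunstall_coding = positive_stationary_chain + tunstall_threshold
begin

lemma tunstall_loss_le:
  assumes s: "s \<in> {1, 2}" and m: "0 < m"
    and R: "\<And>y. \<tau> \<le> path_weight P y \<Longrightarrow> real (length y) * - ln (letter_prob P \<tau>) \<le> R"
  shows "best_unigram_loss s P \<pi> (tunstall_dict P \<tau>) (tunstall_encoding P \<tau> s m) m \<le>
      ereal ((ln (real (m*m) + 1) + R + (1 + ln (1000/999 * CARD('a)) / - ln \<tau>) *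
        (real (m*m) * entropy_rate P \<pi> + real m * - ln (min_trans P))) / real (m*m))"
proof -
  define G where "G = 1 + ln (1000/999 * CARD('a)) / - ln \<tau>"
  define A where "A = ln (real (m*m) + 1) + R"
  have G: "0 \<le> G"
    unfolding G_def using threshold_pos threshold_lt_1 ln_token_overhead_nonneg[where 'a='a]
    by (simp add: divide_nonneg_pos)
  have model: "(uniform_length (m*m), token_prob P \<tau>) \<in> unigram_models (tunstall_dict P \<tau>)"
    by (rule uniform_length_unigram_model) (simp_all add: token_prob_pos less_imp_le sum_token_prob)
  have code: "neg_log (unigram_prob (uniform_length (m*m), token_prob P \<tau>) (tunstall_encoding P \<tau> s m X))
      \<le> ereal (A + G * path_cost P (read_array s m X))" if "X \<in> arrays m" for X
    using that bij_betw_apply[OF bij_betw_read_array[OF m s]] R unfolding A_def G_def tunstall_encoding_def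
    by (intro tunstall_code_length_le) auto
  have "0 \<le> array_prob s P \<pi> m X" for X
    using stationary_nonneg kernel_nonneg
    by (simp add: array_prob_eq_block_chain_prob[OF m s] block_chain_prob_nonneg)
  then have "best_unigram_loss s P \<pi> (tunstall_dict P \<tau>) (tunstall_encoding P \<tau> s m) m \<le>
      ereal ((\<Sum>X\<in>arrays m. array_prob s P \<pi> m X * (A + G * path_cost P (read_array s m X))) / (real m)^2)"
    by (intro best_unigram_loss_le[OF model code])
  also have "(\<Sum>X\<in>arrays m. array_prob s P \<pi> m X * (A + G * path_cost P (read_array s m X))) =
      (\<Sum>y\<in>{y. length y = m*m}. block_chain_prob P \<pi> m y * (A + G * path_cost P y))"
    by (rule sum_arrays_eq_sum_block_chain[OF m s])
  also have "\<dots> = A * (\<Sum>y\<in>{y. length y = m*m}. block_chain_prob P \<pi> m y) +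
      G * (\<Sum>y\<in>{y. length y = m*m}. block_chain_prob P \<pi> m y * path_cost P y)"
    by (simp add: distrib_left sum.distrib sum_distrib_left mult_ac)
  also have "\<dots> = A + G * (\<Sum>y\<in>{y. length y = m*m}. block_chain_prob P \<pi> m y * path_cost P y)"
    by (simp add: block_chain_sum_1)
  also have "\<dots> \<le> A + G * (real (m*m) * entropy_rate P \<pi> + real m * - ln (min_trans P))"
    using expected_path_cost_le G by (simp add: mult_left_mono)
  finally show ?thesis
    by (simp add: A_def G_def power2_eq_square divide_right_mono)
qed

end


lemma normalized_code_bound_le:
  assumes m: "0 < m"
  shows "(ln (real (m*m) + 1) + K + G * (real (m*m) * H + real m * b)) / real (m*m)
     \<le> G * H + (2 + \<bar>K\<bar> + \<bar>G * b\<bar>) / real m"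
proof -
  have "ln (real (m*m) + 1) \<le> ln ((real m + 1) * (real m + 1))"
    by (subst ln_le_cancel_iff) (auto simp: algebra_simps add_pos_nonneg)
  also have "\<dots> \<le> 2 * real m"
    using ln_le_minus_one[of "real m + 1"] by (simp add: ln_mult)
  finally have "ln (real (m*m) + 1) / real m \<le> 2" using m by (simp add: divide_le_eq)
  moreover have "1 \<le> real m" using m by simp
  then have "K / real m \<le> \<bar>K\<bar>"
    by (smt (verit) div_by_1 divide_mono divide_neg_pos)
  ultimately have "ln (real (m*m) + 1) / real m + K / real m + G * b \<le> 2 + \<bar>K\<bar> + \<bar>G * b\<bar>"
    by linarith
  then have "(ln (real (m*m) + 1) / real m + K / real m + G * b) / real m \<le> (2 + \<bar>K\<bar> + \<bar>G * b\<bar>) / real m"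
    by (simp add: divide_right_mono)
  moreover have "(ln (real (m*m) + 1) + K + G * (real (m*m) * H + real m * b)) / real (m*m)
     = G * H + (ln (real (m*m) + 1) / real m + K / real m + G * b) / real m"
    using m by (simp add: field_simps)
  ultimately show ?thesis by simp
qed

lemma limsup_le_of_overhead_bound:
  assumes "\<And>m. 0 < m \<Longrightarrow> f m \<le> ereal ((ln (real (m*m) + 1) + K + G * (real (m*m) * H + real m * b)) / real (m*m))"
  shows "limsup f \<le> ereal (G * H)"
proof -
  define V where "V = 2 + \<bar>K\<bar> + \<bar>G * b\<bar>"
  have "\<forall>\<^sub>F m in sequentially. f m \<le> ereal (G * H + V / real m)"
    using eventually_gt_at_top[of "0::nat"]
    by eventually_elim (use assms normalized_code_bound_le V_def in \<open>meson ereal_less_eq(3) order_trans\<close>)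
  then have "limsup f \<le> limsup (\<lambda>m. ereal (G * H + V / real m))"
    by (rule Limsup_mono)
  also have "\<dots> = ereal (G * H)"
  proof (intro lim_imp_Limsup)
    have "(\<lambda>m. G * H + V / real m) \<longlonglongrightarrow> G * H + 0"
      by (intro tendsto_add tendsto_const tendsto_divide_0[OF tendsto_const]
          filterlim_at_top_imp_at_infinity filterlim_real_sequentially)
    then show "(\<lambda>m. ereal (G * H + V / real m)) \<longlonglongrightarrow> ereal (G * H)"
      by (simp add: tendsto_ereal)
  qed simp
  finally show ?thesis .
qed

lemma (in tunstall_coding) tunstall_limsup_le:
  assumes "s \<in> {1, 2}"
  shows "limsup (\<lambda>m. best_unigram_loss s P \<pi> (tunstall_dict P \<tau>) (tunstall_encoding P \<tau> s m) m)
    \<le> ereal ((1 + ln (1000/999 * CARD('a)) / - ln \<tau>) * entropy_rate P \<pi>)"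
proof -
  obtain R where R: "\<And>y. \<tau> \<le> path_weight P y \<Longrightarrow> real (length y) * - ln (letter_prob P \<tau>) \<le> R"
    using letter_cost_remainder_bound by blast
  show ?thesis
    by (rule limsup_le_of_overhead_bound) (rule tunstall_loss_le[OF assms _ R])
qed

lemma (in positive_stationary_chain) tunstall_dictionary_exists:
  assumes s: "s \<in> {1, 2}" and \<tau>: "0 < \<tau>" "\<tau> < 1"
    and size: "real CARD('a) / (\<tau> * min_trans P) + real CARD('a) \<le> real D"
    and factor: "(1 + ln (1000/999 * CARD('a)) / - ln \<tau>) * entropy_rate P \<pi> \<le> B"
  shows "\<exists>Dict enc. finite Dict \<and> card Dict \<le> D \<and> (\<forall>t\<in>Dict. t \<noteq> []) \<and>
           (\<forall>m. \<forall>X\<in>arrays m. set (enc m X) \<subseteq> Dict \<and> concat (enc m X) = read_array s m X) \<and>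
           limsup (\<lambda>m. best_unigram_loss s P \<pi> Dict (enc m) m) \<le> ereal B"
proof -
  interpret tunstall_coding P \<pi> \<tau>
    using \<tau> by unfold_locales
  have "card (tunstall_dict P \<tau>) \<le> D"
    using card_tunstall_dict_le size by linarith
  moreover have "limsup (\<lambda>m. best_unigram_loss s P \<pi> (tunstall_dict P \<tau>) (tunstall_encoding P \<tau> s m) m) \<le> ereal B"
    using tunstall_limsup_le[OF s] factor by (meson ereal_less_eq(3) order_trans)
  ultimately show ?thesis
    by (intro exI[of _ "tunstall_dict P \<tau>"] exI[of _ "tunstall_encoding P \<tau> s"] conjI allI ballI)
       (simp_all add: finite_tunstall_dict tunstall_dict_nonempty tunstall_encoding_tokens)
qed

section \<open>Choosing the threshold from the dictionary size\<close>

text \<open>With \<open>T = L - b - ln (2 C)\<close> and \<open>c = ln (1000/999 C)\<close>, the claim is \<open>(T + c) / T \<le> 0.99 L / (0.99 L - b)\<close>,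
  i.e. \<open>c (0.99 L - b) \<le> b T\<close>; this holds for large \<open>L\<close> since \<open>b \<ge> ln C \<ge> ln 2\<close> makes
  \<open>b - 0.99 c \<ge> 1/250\<close>.\<close>

lemma overhead_factor_le:
  fixes C b L :: real
  assumes C: "2 \<le> C" and b: "ln C \<le> b"
    and L: "2 + 2*b + ln (2*C) + 250 * (b*b + b * ln (2*C)) \<le> L"
  shows "1 + ln (1000/999 * C) / (L - b - ln (2*C)) \<le> 1 / (1 - b / (0.99 * L))"
proof -
  define c where "c = ln (1000/999 * C)"
  define T where "T = L - b - ln (2*C)"
  define Z where "Z = 99/100 * L - b"
  have "1/2 \<le> ln (2::real)" using ln_le_minus_one[of "1/2::real"] by (simp add: ln_div)
  also have "\<dots> \<le> ln C" using C by simp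
  finally have lnC: "1/2 \<le> ln C" .
  have "ln (1000/999::real) \<le> 1/999" using ln_le_minus_one[of "1000/999::real"] by simp
  moreover have "c = ln (1000/999) + ln C" unfolding c_def using C by (subst ln_mult) auto
  ultimately have c_le: "c \<le> ln C + 1/999" by linarith
  have c0: "0 \<le> c" unfolding c_def using C by simp
  have b0: "0 \<le> b" and ln2C: "0 \<le> ln (2*C)" using lnC b C by auto
  have quad: "0 \<le> 250 * (b*b + b * ln (2*C))" using b0 ln2C by simp
  have T0: "0 < T" using L quad b0 ln2C unfolding T_def by linarith
  have Z0: "0 < Z" using L quad b0 ln2C unfolding Z_def by linarith
  have L0: "0 < L" using L quad b0 ln2C by linarith
  have "1/250 \<le> b - c * (99/100)" using c_le lnC b by linarith
  then have slope: "L / 250 \<le> L * (b - c * (99/100))" using mult_left_mono[of "1/250" _ L] L0 by simp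
  have "250 * (b*b + b * ln (2*C)) \<le> L" using L b0 ln2C by linarith
  then have "b*b + b * ln (2*C) \<le> L * (b - c * (99/100))" using slope by simp
  moreover have "0 \<le> b * c" using b0 c0 by simp
  ultimately have "c * Z \<le> b * T" unfolding T_def Z_def by (simp add: algebra_simps)
  then have "(T + c) * Z \<le> (99/100 * L) * T" by (simp add: Z_def algebra_simps)
  then have "1 + c / T \<le> (99/100 * L) / Z" using T0 Z0 by (simp add: field_simps)
  also have "\<dots> = 1 / (1 - b / (0.99 * L))" using L0 Z0 by (simp add: Z_def field_simps)
  finally show ?thesis by (simp add: c_def T_def)
qed

lemma tunstall_threshold_bounds:
  fixes C \<delta> H :: real and D :: nat
  assumes C: "1 \<le> C" and \<delta>: "0 < \<delta>" "C * \<delta> \<le> 1" and H: "0 \<le> H" "2 \<le> C \<or> H = 0"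
    and D: "exp (2 + 2 * ln (1/\<delta>) + ln (2*C) + 250 * (ln (1/\<delta>) * ln (1/\<delta>) + ln (1/\<delta>) * ln (2*C)))
      \<le> real D"
  shows "0 < 2*C / (\<delta> * real D) \<and> 2*C / (\<delta> * real D) < 1 \<and>
    C / (2*C / (\<delta> * real D) * \<delta>) + C \<le> real D \<and>
    (1 + ln (1000/999 * C) / - ln (2*C / (\<delta> * real D))) * H \<le> H / (1 - ln (1/\<delta>) / (0.99 * ln (real D)))"
proof -
  define b where "b = ln (1/\<delta>)"
  define R where "R = 2 + 2*b + ln (2*C) + 250 * (b*b + b * ln (2*C))"
  let ?\<tau> = "2*C / (\<delta> * real D)"
  have "C \<le> 1/\<delta>" using \<delta> by (simp add: le_divide_eq mult.commute)
  then have "ln C \<le> b" unfolding b_def using C \<delta> by simp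
  moreover have "0 \<le> ln C" using C by simp
  ultimately have b0: "0 \<le> b" by linarith
  have ln2C: "0 \<le> ln (2*C)" using C by simp
  have quad: "0 \<le> 250 * (b*b + b * ln (2*C))" using b0 ln2C by simp
  have D0: "0 < real D" using D by (meson exp_gt_zero less_le_trans)
  then have L: "R \<le> ln (real D)" using D unfolding R_def b_def by (metis ln_exp ln_le_cancel_iff exp_gt_zero)
  have ln_\<tau>: "- ln ?\<tau> = ln (real D) - b - ln (2*C)"
    unfolding b_def using C \<delta> D0 by (simp add: ln_div ln_mult)
  have "b + ln (2*C) < ln (real D)" using L b0 quad unfolding R_def by linarith
  then have "ln ?\<tau> < 0" using ln_\<tau> by linarith
  moreover have "0 < ?\<tau>" using C \<delta> D0 by simp
  ultimately have "?\<tau> < 1" by simp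
  have "ln (2 * C) \<le> ln (real D)" using L b0 quad unfolding R_def by linarith
  then have "2 * C \<le> real D" using C D0 by simp
  then have "C / (?\<tau> * \<delta>) + C \<le> real D" using C \<delta> D0 by (simp add: field_simps)
  moreover have "(1 + ln (1000/999 * C) / - ln ?\<tau>) * H \<le> H / (1 - b / (0.99 * ln (real D)))"
    using H
  proof (elim disjE)
    assume "2 \<le> C"
    then have "1 + ln (1000/999 * C) / - ln ?\<tau> \<le> 1 / (1 - b / (0.99 * ln (real D)))"
      unfolding ln_\<tau> using \<open>ln C \<le> b\<close> L unfolding R_def by (rule overhead_factor_le)
    then have "(1 + ln (1000/999 * C) / - ln ?\<tau>) * H \<le> 1 / (1 - b / (0.99 * ln (real D))) * H"
      using H by (intro mult_right_mono) auto
    then show ?thesis by simp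
  qed simp
  ultimately show ?thesis using \<open>0 < ?\<tau>\<close> \<open>?\<tau> < 1\<close> by (simp add: b_def)
qed

lemma eventually_tunstall_threshold_bounds:
  fixes C \<delta> H :: real
  assumes "1 \<le> C" and "0 < \<delta>" "C * \<delta> \<le> 1" and "0 \<le> H" "2 \<le> C \<or> H = 0"
  shows "\<forall>\<^sub>F D in sequentially.
    0 < 2*C / (\<delta> * real D) \<and> 2*C / (\<delta> * real D) < 1 \<and>
    C / (2*C / (\<delta> * real D) * \<delta>) + C \<le> real D \<and>
    (1 + ln (1000/999 * C) / - ln (2*C / (\<delta> * real D))) * H \<le> H / (1 - ln (1/\<delta>) / (0.99 * ln (real D)))"
proof -
  have "\<forall>\<^sub>F D in sequentially.
      exp (2 + 2 * ln (1/\<delta>) + ln (2*C) + 250 * (ln (1/\<delta>) * ln (1/\<delta>) + ln (1/\<delta>) * ln (2*C))) \<le> real D"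
    using filterlim_real_sequentially by (simp add: filterlim_at_top)
  then show ?thesis
    by eventually_elim (rule tunstall_threshold_bounds[OF assms])
qed

theorem proposition2:
  fixes P :: "'a::finite \<Rightarrow> 'a \<Rightarrow> real" and \<pi> :: "'a \<Rightarrow> real" and s :: nat
  assumes "markov_kernel P"
    and "stationary P \<pi>"
    and "min_trans P > 0"
    and "s \<in> {1, 2}"
  shows "\<exists>D0::nat. \<forall>D\<ge>D0. \<exists>Dict :: 'a list set. \<exists>enc :: nat \<Rightarrow> (nat \<Rightarrow> nat \<Rightarrow> 'a) \<Rightarrow> 'a list list.
           finite Dict \<and> card Dict \<le> D \<and> (\<forall>t\<in>Dict. t \<noteq> []) \<and>
           (\<forall>m. \<forall>X\<in>arrays m. set (enc m X) \<subseteq> Dict \<and> concat (enc m X) = read_array s m X) \<and>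
           limsup (\<lambda>m. best_unigram_loss s P \<pi> Dict (enc m) m)
             \<le> ereal (entropy_rate P \<pi> /
                 (1 - ln (1 / min_trans P) / (0.99 * ln (real D))))"
proof -
  interpret positive_stationary_chain P \<pi>
    using assms by unfold_locales
  have "1 \<le> real CARD('a)" by (simp add: Suc_le_eq finite_UNIV_card_ge_0)
  moreover have "2 \<le> real CARD('a) \<or> entropy_rate P \<pi> = 0"
    using entropy_rate_eq_0_if_card_lt_2 by fastforce
  ultimately have "\<forall>\<^sub>F D in sequentially.
    0 < 2 * real CARD('a) / (min_trans P * real D) \<and> 2 * real CARD('a) / (min_trans P * real D) < 1 \<and>
    real CARD('a) / (2 * real CARD('a) / (min_trans P * real D) * min_trans P) + real CARD('a) \<le> real D \<and>
    (1 + ln (1000/999 * real CARD('a)) / - ln (2 * real CARD('a) / (min_trans P * real D))) * entropy_rate P \<pi>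
      \<le> entropy_rate P \<pi> / (1 - ln (1 / min_trans P) / (0.99 * ln (real D)))"
    using eventually_tunstall_threshold_bounds min_trans_pos card_mult_min_trans_le_1 entropy_rate_nonneg by blast
  then show ?thesis
    unfolding eventually_sequentially[symmetric]
    by eventually_elim (use tunstall_dictionary_exists[OF assms(4)] in blast)
qed

end
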